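(* Let $L$ be an h-local C-lattice domain in which every element is a join of principal elements. If $a,b\in L\setminus\{0\}$ and $m$ is a maximal element of $L$, then $(a:b)_m=(a_m:b_m)$.
   Context: A multiplicative lattice is a complete lattice $(L,\le)$ with bottom $0$ and top $1$ which is also a commutative monoid with identity $1$ such that $a(\bigvee_\alpha b_\alpha)=\bigvee_\alpha(ab_\alpha)$ for all $a,b_\alpha\in L$. For $x,y\in L$, $(y:x)=\bigvee\{c\in L: cx\le y\}$. An element $c$ is compact if $c\le\bigvee S$ implies $c\le\bigvee T$ for some finite $T\subseteq S$. A C-lattice is a multiplicative lattice in which $1$ is compact, the product of two compact elements is compact, and every element is a join of compact elements; $L^*$ denotes its compact elements. A proper element $p\ne1$ is prime if $xy\le p$ implies $x\le p$ or $y\le p$; maximal elements are maximal in $L\setminus\{1\}$; $L$ is a domain if $0$ is prime. An element $x$ is principal if $y\wedge zx=((y:x)\wedge z)x$ and $y\vee(z:x)=((yx\vee z):x)$ for all $y,z\in L$. For $p$ prime and $x\in L$, $x_p=\bigvee\{c\in L^*: cs\le x \text{ for some } s\in L^*,\ s\not\le p\}$. $L$ has finite character if every nonzero element is below only finitely many maximal elements; $L$ is h-local if it has finite character and every nonzero prime element is below a unique maximal element. *)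

theory Defs
  imports Main
begin

definition mult_lattice :: "('a::complete_lattice \<Rightarrow> 'a \<Rightarrow> 'a) \<Rightarrow> bool" where
  "mult_lattice mul \<longleftrightarrow>
     (\<forall>a b c. mul (mul a b) c = mul a (mul b c)) \<and>
     (\<forall>a b. mul a b = mul b a) \<and>
     (\<forall>a. mul top a = a) \<and>
     (\<forall>a B. mul a (Sup B) = Sup ((\<lambda>b. mul a b) ` B))"

definition res :: "('a::complete_lattice \<Rightarrow> 'a \<Rightarrow> 'a) \<Rightarrow> 'a \<Rightarrow> 'a \<Rightarrow> 'a" where
  "res mul y x = Sup {c. mul c x \<le> y}"

definition compact_el :: "'a::complete_lattice \<Rightarrow> bool" where
  "compact_el c \<longleftrightarrow> (\<forall>S. c \<le> Sup S \<longrightarrow> (\<exists>T. T \<subseteq> S \<and> finite T \<and> c \<le> Sup T))"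

definition C_lattice :: "('a::complete_lattice \<Rightarrow> 'a \<Rightarrow> 'a) \<Rightarrow> bool" where
  "C_lattice (mul::'a \<Rightarrow> 'a \<Rightarrow> 'a) \<longleftrightarrow> mult_lattice mul \<and> compact_el (top::'a) \<and>
     (\<forall>a b. compact_el a \<and> compact_el b \<longrightarrow> compact_el (mul a b)) \<and>
     (\<forall>x::'a. \<exists>S. (\<forall>c\<in>S. compact_el c) \<and> x = Sup S)"

definition prime_el :: "('a::complete_lattice \<Rightarrow> 'a \<Rightarrow> 'a) \<Rightarrow> 'a \<Rightarrow> bool" where
  "prime_el mul p \<longleftrightarrow> p \<noteq> top \<and> (\<forall>x y. mul x y \<le> p \<longrightarrow> x \<le> p \<or> y \<le> p)"

definition maximal_el :: "'a::complete_lattice \<Rightarrow> bool" where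
  "maximal_el m \<longleftrightarrow> m \<noteq> top \<and> (\<forall>x. m \<le> x \<and> x \<noteq> top \<longrightarrow> x = m)"

definition lattice_domain :: "('a::complete_lattice \<Rightarrow> 'a \<Rightarrow> 'a) \<Rightarrow> bool" where
  "lattice_domain (mul::'a \<Rightarrow> 'a \<Rightarrow> 'a) \<longleftrightarrow> prime_el mul (bot::'a)"

definition principal_el :: "('a::complete_lattice \<Rightarrow> 'a \<Rightarrow> 'a) \<Rightarrow> 'a \<Rightarrow> bool" where
  "principal_el mul x \<longleftrightarrow>
     (\<forall>y z. inf y (mul z x) = mul (inf (res mul y x) z) x \<and>
            sup y (res mul z x) = res mul (sup (mul y x) z) x)"

definition loc :: "('a::complete_lattice \<Rightarrow> 'a \<Rightarrow> 'a) \<Rightarrow> 'a \<Rightarrow> 'a \<Rightarrow> 'a" where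
  "loc mul p x = Sup {c. compact_el c \<and> (\<exists>s. compact_el s \<and> \<not> s \<le> p \<and> mul c s \<le> x)}"

definition h_local :: "('a::complete_lattice \<Rightarrow> 'a \<Rightarrow> 'a) \<Rightarrow> bool" where
  "h_local (mul::'a \<Rightarrow> 'a \<Rightarrow> 'a) \<longleftrightarrow>
     (\<forall>x::'a. x \<noteq> bot \<longrightarrow> finite {m. maximal_el m \<and> x \<le> m}) \<and>
     (\<forall>p. prime_el mul p \<and> p \<noteq> bot \<longrightarrow> (\<exists>!m. maximal_el m \<and> p \<le> m))"

end

theory Submission
  imports Defs
begin

text \<open>
  Localization is multiplicative, which gives \<open>(a:b)\<^sub>m \<le> (a\<^sub>m:b\<^sub>m)\<close> in every C-lattice.
  Conversely, let \<open>x\<close> be compact with \<open>x b\<^sub>m \<le> a\<^sub>m\<close> and put \<open>C = x b\<close>.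
  For each of the finitely many maximal \<open>N \<noteq> m\<close> above \<open>a\<close>, h-locality forces
  \<open>a\<^sub>N \<not>\<le> m\<close>: otherwise a prime above \<open>a\<^sub>N\<close> avoiding the products of compacts outside \<open>N\<close>
  and outside \<open>m\<close> would be a nonzero prime below both \<open>N\<close> and \<open>m\<close>.
  Hence one compact \<open>s \<not>\<le> m\<close> satisfies \<open>s C \<le> a\<^sub>N\<close> for all these \<open>N\<close>; moreover
  \<open>s C \<le> C \<le> a\<^sub>m\<close>, and \<open>a\<^sub>N = 1\<close> for maximal \<open>N\<close> not above \<open>a\<close>.
  By the local-global principle \<open>s C \<le> a\<close>, so \<open>x s \<le> (a:b)\<close> and \<open>x \<le> (a:b)\<^sub>m\<close>.
\<close>

lemma compact_elD:
  "compact_el c \<Longrightarrow> c \<le> Sup S \<Longrightarrow> \<exists>T. T \<subseteq> S \<and> finite T \<and> c \<le> Sup T"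
  unfolding compact_el_def by blast

lemma compact_le_Sup_chainD:
  fixes C :: "'a::complete_lattice set"
  assumes c: "compact_el c" "c \<le> Sup C"
    and C: "C \<noteq> {}" "\<forall>x\<in>C. \<forall>y\<in>C. x \<le> y \<or> y \<le> x"
  shows "\<exists>y\<in>C. c \<le> y"
proof -
  obtain T where T: "T \<subseteq> C" "finite T" "c \<le> Sup T"
    using compact_elD[OF c] by blast
  show ?thesis
  proof (cases "T = {}")
    case True
    then have "c \<le> y" for y using T(3) by (simp add: bot_unique)
    then show ?thesis using C(1) by blast
  next
    case False
    then obtain f where f: "f \<in> T" "\<forall>g\<in>T. f \<le> g \<longrightarrow> f = g"
      using finite_has_maximal[OF T(2)] by blast
    have "\<forall>g\<in>T. g \<le> f" using f T(1) C(2) by blast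
    then have "c \<le> f" using T(3) by (meson Sup_least order_trans)
    then show ?thesis using f(1) T(1) by blast
  qed
qed

lemma exists_maximal_avoiding_compacts:
  fixes x :: "'a::complete_lattice"
  assumes T: "\<forall>u\<in>T. compact_el u" and x: "\<forall>u\<in>T. \<not> u \<le> x"
  shows "\<exists>p. x \<le> p \<and> (\<forall>u\<in>T. \<not> u \<le> p) \<and>
               (\<forall>q. p \<le> q \<and> (\<forall>u\<in>T. \<not> u \<le> q) \<longrightarrow> q = p)"
proof -
  define A where "A = {y. x \<le> y \<and> (\<forall>u\<in>T. \<not> u \<le> y)}"
  have po: "partial_order_on A (relation_of (\<le>) A)"
    by (rule partial_order_on_relation_ofI) (simp_all add: antisym)
  have "\<exists>p\<in>A. \<forall>q\<in>A. p \<le> q \<longrightarrow> q = p"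
  proof (rule predicate_Zorn[OF po])
    fix C assume "C \<in> Chains (relation_of (\<le>) A)"
    then have CA: "C \<subseteq> A" and chain: "\<forall>y\<in>C. \<forall>z\<in>C. y \<le> z \<or> z \<le> y"
      unfolding Chains_def relation_of_def by blast+
    show "\<exists>u\<in>A. \<forall>y\<in>C. y \<le> u"
    proof (cases "C = {}")
      case True
      then show ?thesis using x unfolding A_def by auto
    next
      case False
      then obtain y where y: "y \<in> C" by blast
      have "x \<le> Sup C" using y CA unfolding A_def by (blast intro: Sup_upper2)
      moreover have "\<not> u \<le> Sup C" if u: "u \<in> T" for u
        using compact_le_Sup_chainD[OF _ _ False chain] T u CA unfolding A_def by blast
      ultimately have "Sup C \<in> A" unfolding A_def by blast
      then show ?thesis by (blast intro: Sup_upper)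
    qed
  qed
  then show ?thesis unfolding A_def by (auto intro: order_trans)
qed

locale c_lattice =
  fixes mul :: "'a::complete_lattice \<Rightarrow> 'a \<Rightarrow> 'a"
  assumes C_lattice: "C_lattice mul"
begin

lemma mul_assoc: "mul (mul a b) c = mul a (mul b c)"
  using C_lattice unfolding C_lattice_def mult_lattice_def by blast

lemma mul_commute: "mul a b = mul b a"
  using C_lattice unfolding C_lattice_def mult_lattice_def by blast

lemma mul_left_commute: "mul a (mul b c) = mul b (mul a c)"
  by (simp only: mul_assoc[symmetric] mul_commute[of a b])

lemmas mul_ac = mul_assoc mul_commute mul_left_commute

lemma mul_top_left [simp]: "mul top a = a"
  using C_lattice unfolding C_lattice_def mult_lattice_def by blast

lemma mul_top_right [simp]: "mul a top = a"
  using mul_commute[of a top] by simp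

lemma mul_Sup: "mul a (Sup B) = Sup ((\<lambda>b. mul a b) ` B)"
  using C_lattice unfolding C_lattice_def mult_lattice_def by blast

lemma Sup_mul: "mul (Sup B) a = Sup ((\<lambda>b. mul b a) ` B)"
  by (simp add: mul_commute[of _ a] mul_Sup)

lemma mul_sup: "mul a (sup b c) = sup (mul a b) (mul a c)"
  using mul_Sup[of a "{b, c}"] by simp

lemma mul_mono: "x \<le> y \<Longrightarrow> u \<le> v \<Longrightarrow> mul x u \<le> mul y v"
proof -
  have right: "mul z u \<le> mul z v" if "u \<le> v" for z u v
    using mul_sup[of z u v] that by (simp add: sup.absorb2 le_iff_sup)
  assume "x \<le> y" "u \<le> v"
  then show ?thesis
    using right[of x y u] right[of u v y] by (simp add: mul_commute order_trans)
qed

lemma mul_le_left: "mul x y \<le> x"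
  using mul_mono[of x x y top] by simp

lemma mul_le_right: "mul x y \<le> y"
  using mul_le_left[of y x] by (simp add: mul_commute)

lemma top_compact: "compact_el (top::'a)"
  using C_lattice unfolding C_lattice_def by blast

lemma compact_mul: "compact_el a \<Longrightarrow> compact_el b \<Longrightarrow> compact_el (mul a b)"
  using C_lattice unfolding C_lattice_def by blast

lemma le_res_iff: "c \<le> res mul y x \<longleftrightarrow> mul c x \<le> y"
proof
  assume "c \<le> res mul y x"
  then have "mul c x \<le> mul (res mul y x) x" by (rule mul_mono) simp
  also have "\<dots> \<le> y" unfolding res_def Sup_mul by (auto intro: Sup_least)
  finally show "mul c x \<le> y" .
qed (simp add: res_def Sup_upper)

lemma mul_res_le: "mul (res mul y x) x \<le> y"
  using le_res_iff by blast

lemma Sup_compacts_below: "Sup {c. compact_el c \<and> c \<le> x} = (x::'a)"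
proof -
  obtain S where S: "\<forall>c\<in>S. compact_el c" "x = Sup S"
    using C_lattice unfolding C_lattice_def by blast
  then have "S \<subseteq> {c. compact_el c \<and> c \<le> x}" by (auto intro: Sup_upper)
  then have "x \<le> Sup {c. compact_el c \<and> c \<le> x}" using S(2) by (simp add: Sup_subset_mono)
  then show ?thesis by (auto intro: antisym Sup_least)
qed

lemma le_by_compacts:
  assumes "\<And>c. compact_el c \<Longrightarrow> c \<le> x \<Longrightarrow> c \<le> y"
  shows "x \<le> (y::'a)"
proof -
  have "x = Sup {c. compact_el c \<and> c \<le> x}" by (simp only: Sup_compacts_below)
  also have "\<dots> \<le> y" using assms by (auto intro: Sup_least)
  finally show ?thesis .
qed

lemma not_le_compactE:
  assumes "\<not> x \<le> (y::'a)"
  obtains c where "compact_el c" "c \<le> x" "\<not> c \<le> y"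
  using assms le_by_compacts by blast

lemma mul_sup_sup_le: "mul (sup p a) (sup p b) \<le> sup p (mul a b)"
proof -
  have "mul (sup p a) b = sup (mul b p) (mul a b)"
    by (simp add: mul_commute[of "sup p a"] mul_sup mul_commute[of b a])
  also have "\<dots> \<le> sup p (mul a b)" using mul_le_right[of b p] by (rule sup_mono) simp
  finally have "mul (sup p a) b \<le> sup p (mul a b)" .
  moreover have "mul (sup p a) p \<le> sup p (mul a b)" using mul_le_right by (rule le_supI1)
  ultimately show ?thesis by (simp add: mul_sup)
qed

lemma exists_prime_avoiding:
  assumes T: "\<forall>u\<in>T. compact_el u" "T \<noteq> {}" "\<forall>u\<in>T. \<forall>v\<in>T. mul u v \<in> T"
    and x: "\<forall>u\<in>T. \<not> u \<le> x"
  obtains p where "prime_el mul p" "x \<le> p" "\<forall>u\<in>T. \<not> u \<le> p"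
proof -
  obtain p where p: "x \<le> p" "\<forall>u\<in>T. \<not> u \<le> p"
    and p_max: "\<And>q. p \<le> q \<Longrightarrow> \<forall>u\<in>T. \<not> u \<le> q \<Longrightarrow> q = p"
    using exists_maximal_avoiding_compacts[OF T(1) x] by blast
  have "a \<le> p \<or> b \<le> p" if ab: "mul a b \<le> p" for a b
  proof (rule ccontr)
    assume "\<not> (a \<le> p \<or> b \<le> p)"
    then have "sup p a \<noteq> p" "sup p b \<noteq> p" by (metis sup.cobounded2)+
    then obtain u v where uv: "u \<in> T" "u \<le> sup p a" "v \<in> T" "v \<le> sup p b"
      using p_max by (metis sup.cobounded1)
    have "mul u v \<le> sup p (mul a b)"
      using mul_mono[OF uv(2,4)] mul_sup_sup_le by (rule order_trans)
    then have "mul u v \<le> p" using ab by (simp add: sup_absorb1)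
    then show False using T(3) uv p(2) by blast
  qed
  moreover have "p \<noteq> top" using p(2) T(2) by auto
  ultimately show thesis using that p unfolding prime_el_def by blast
qed

lemma maximal_el_imp_prime:
  assumes m: "maximal_el m"
  shows "prime_el mul m"
proof -
  have "\<not> top \<le> m" using m unfolding maximal_el_def by (simp add: top_unique)
  then obtain p where p: "prime_el mul p" "m \<le> p"
    using exists_prime_avoiding[of "{top}" m] top_compact by auto
  then have "p = m" using m unfolding maximal_el_def prime_el_def by blast
  then show ?thesis using p(1) by simp
qed

lemma exists_maximal_above:
  assumes "(x::'a) \<noteq> top"
  obtains N where "maximal_el N" "x \<le> N"
proof -
  obtain p where p: "x \<le> p" "\<not> top \<le> p" "\<And>q. p \<le> q \<Longrightarrow> \<not> top \<le> q \<Longrightarrow> q = p"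
    using exists_maximal_avoiding_compacts[of "{top}" x] top_compact assms by (auto simp: top_unique)
  then have "maximal_el p" unfolding maximal_el_def by (auto simp: top_unique)
  then show thesis using that p(1) by blast
qed

lemma exists_compact_below_all_not_le_prime:
  assumes p: "prime_el mul p" and I: "finite I" "\<forall>i\<in>I. \<not> y i \<le> p"
  shows "\<exists>s. compact_el s \<and> \<not> s \<le> p \<and> (\<forall>i\<in>I. s \<le> y i)"
  using I
proof (induction I rule: finite_induct)
  case empty
  have "\<not> top \<le> p" using p by (simp add: prime_el_def top_unique)
  then show ?case using top_compact by blast
next
  case (insert i I)
  then obtain s where s: "compact_el s" "\<not> s \<le> p" "\<forall>j\<in>I. s \<le> y j" by auto
  obtain c where c: "compact_el c" "c \<le> y i" "\<not> c \<le> p"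
    using insert.prems by (auto elim: not_le_compactE)
  have "compact_el (mul s c)" "\<not> mul s c \<le> p"
    using s c p compact_mul unfolding prime_el_def by blast+
  moreover have "\<forall>j\<in>insert i I. mul s c \<le> y j"
    using s(3) c(2) mul_le_left[of s c] mul_le_right[of s c] by (auto intro: order_trans)
  ultimately show ?case by blast
qed

lemma le_locI:
  "compact_el c \<Longrightarrow> compact_el s \<Longrightarrow> \<not> s \<le> p \<Longrightarrow> mul c s \<le> x \<Longrightarrow> c \<le> loc mul p x"
  unfolding loc_def by (rule Sup_upper) blast

lemma compact_le_loc_iff:
  assumes p: "prime_el mul p" and c: "compact_el c"
  shows "c \<le> loc mul p x \<longleftrightarrow> (\<exists>s. compact_el s \<and> \<not> s \<le> p \<and> mul c s \<le> x)"
proof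
  assume "c \<le> loc mul p x"
  then obtain T where T: "T \<subseteq> {d. compact_el d \<and> (\<exists>s. compact_el s \<and> \<not> s \<le> p \<and> mul d s \<le> x)}"
      "finite T" "c \<le> Sup T"
    using compact_elD[OF c] unfolding loc_def by blast
  have "\<not> res mul x d \<le> p" if "d \<in> T" for d
  proof -
    obtain s where s: "compact_el s" "\<not> s \<le> p" "mul d s \<le> x" using T(1) \<open>d \<in> T\<close> by blast
    then have "s \<le> res mul x d" by (simp add: le_res_iff mul_commute[of s])
    then show ?thesis using s(2) by (blast intro: order_trans)
  qed
  then obtain s where s: "compact_el s" "\<not> s \<le> p" "\<forall>d\<in>T. s \<le> res mul x d"
    using exists_compact_below_all_not_le_prime[OF p T(2)] by blast
  have "mul c s \<le> mul (Sup T) s" using T(3) by (rule mul_mono) simp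
  also have "\<dots> \<le> x"
    using s(3) unfolding Sup_mul by (auto simp: le_res_iff mul_commute[of s] intro: Sup_least)
  finally show "\<exists>s. compact_el s \<and> \<not> s \<le> p \<and> mul c s \<le> x" using s(1,2) by blast
qed (use c le_locI in blast)

lemma le_loc: "p \<noteq> top \<Longrightarrow> x \<le> loc mul p x"
  by (rule le_by_compacts, rule le_locI[OF _ top_compact]) (auto simp: top_unique)

lemma loc_mono: "x \<le> y \<Longrightarrow> loc mul p x \<le> loc mul p y"
  unfolding loc_def by (rule Sup_subset_mono) (blast intro: order_trans)

lemma loc_eq_top:
  assumes "\<not> x \<le> p"
  shows "loc mul p x = top"
proof -
  obtain d where "compact_el d" "d \<le> x" "\<not> d \<le> p" using assms by (rule not_le_compactE)
  then have "top \<le> loc mul p x" by (intro le_locI[OF top_compact]) simp_all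
  then show ?thesis by (simp add: top_unique)
qed

lemma loc_saturated:
  assumes p: "prime_el mul p" and u: "compact_el u" "\<not> u \<le> p"
    and uv: "mul u v \<le> loc mul p x"
  shows "v \<le> loc mul p x"
proof (rule le_by_compacts)
  fix y assume y: "compact_el y" "y \<le> v"
  have "mul u y \<le> loc mul p x" using uv mul_mono[OF order_refl y(2)] by (rule order_trans[rotated])
  then obtain t where t: "compact_el t" "\<not> t \<le> p" "mul (mul u y) t \<le> x"
    using compact_le_loc_iff[OF p compact_mul[OF u(1) y(1)]] by blast
  have "mul y (mul u t) \<le> x" using t(3) by (simp only: mul_ac)
  moreover have "compact_el (mul u t)" "\<not> mul u t \<le> p"
    using u t p compact_mul unfolding prime_el_def by blast+
  ultimately show "y \<le> loc mul p x" using y(1) by (blast intro: le_locI)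
qed

lemma mul_loc_le_loc_mul:
  assumes p: "prime_el mul p"
  shows "mul (loc mul p x) (loc mul p y) \<le> loc mul p (mul x y)"
proof -
  have "loc mul p x \<le> res mul (loc mul p (mul x y)) (loc mul p y)"
  proof (rule le_by_compacts)
    fix c assume c: "compact_el c" "c \<le> loc mul p x"
    obtain s where s: "compact_el s" "\<not> s \<le> p" "mul c s \<le> x"
      using compact_le_loc_iff[OF p c(1)] c(2) by blast
    have "loc mul p y \<le> res mul (loc mul p (mul x y)) c"
    proof (rule le_by_compacts)
      fix d assume d: "compact_el d" "d \<le> loc mul p y"
      obtain t where t: "compact_el t" "\<not> t \<le> p" "mul d t \<le> y"
        using compact_le_loc_iff[OF p d(1)] d(2) by blast
      have "mul (mul d c) (mul s t) = mul (mul c s) (mul d t)" by (simp only: mul_ac)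
      also have "\<dots> \<le> mul x y" using s(3) t(3) by (rule mul_mono)
      finally have "mul d c \<le> loc mul p (mul x y)"
        using s t c d p compact_mul unfolding prime_el_def by (blast intro: le_locI)
      then show "d \<le> res mul (loc mul p (mul x y)) c" by (simp add: le_res_iff)
    qed
    then show "c \<le> res mul (loc mul p (mul x y)) (loc mul p y)"
      by (simp add: le_res_iff mul_commute[of c])
  qed
  then show ?thesis by (simp add: le_res_iff)
qed

lemma le_of_le_loc_maximal:
  assumes "\<And>N. maximal_el N \<Longrightarrow> y \<le> loc mul N x"
  shows "y \<le> x"
proof (rule le_by_compacts)
  fix c assume c: "compact_el c" "c \<le> y"
  show "c \<le> x"
  proof (cases "res mul x c = top")
    case True
    then show ?thesis using mul_res_le[of x c] by simp
  next
    case False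
    then obtain N where N: "maximal_el N" "res mul x c \<le> N" by (rule exists_maximal_above)
    have "c \<le> loc mul N x" using assms[OF N(1)] c(2) by simp
    then obtain t where t: "compact_el t" "\<not> t \<le> N" "mul c t \<le> x"
      using compact_le_loc_iff[OF maximal_el_imp_prime[OF N(1)] c(1)] by blast
    have "t \<le> res mul x c" using t(3) by (simp add: le_res_iff mul_commute)
    then show ?thesis using t(2) N(2) by simp
  qed
qed

lemma exists_prime_below_if_loc_le:
  assumes Np: "prime_el mul N" and mp: "prime_el mul m" and le: "loc mul N x \<le> m"
  obtains p where "prime_el mul p" "loc mul N x \<le> p" "p \<le> N" "p \<le> m"
proof -
  define T where "T = {mul u v | u v. compact_el u \<and> \<not> u \<le> N \<and> compact_el v \<and> \<not> v \<le> m}"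
  have tN: "\<not> top \<le> N" and tm: "\<not> top \<le> m"
    using Np mp unfolding prime_el_def by (simp_all add: top_unique)
  have T_N: "u \<in> T" if "compact_el u" "\<not> u \<le> N" for u
    unfolding T_def by (intro CollectI exI[of _ u] exI[of _ top]) (simp add: that tm top_compact)
  have T_m: "v \<in> T" if "compact_el v" "\<not> v \<le> m" for v
    unfolding T_def by (intro CollectI exI[of _ top] exI[of _ v]) (simp add: that tN top_compact)
  have "\<forall>w\<in>T. compact_el w" unfolding T_def using compact_mul by blast
  moreover have "T \<noteq> {}" using T_m[OF top_compact tm] by blast
  moreover have "\<forall>w\<in>T. \<forall>w'\<in>T. mul w w' \<in> T"
  proof (intro ballI)
    fix w w' assume "w \<in> T" "w' \<in> T"
    then obtain u v u' v' where uv: "w = mul u v" "compact_el u" "\<not> u \<le> N" "compact_el v" "\<not> v \<le> m"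
      and uv': "w' = mul u' v'" "compact_el u'" "\<not> u' \<le> N" "compact_el v'" "\<not> v' \<le> m"
      unfolding T_def by blast
    have "mul w w' = mul (mul u u') (mul v v')" unfolding uv uv' by (simp only: mul_ac)
    moreover have "compact_el (mul u u')" "compact_el (mul v v')" using uv uv' compact_mul by auto
    moreover have "\<not> mul u u' \<le> N" "\<not> mul v v' \<le> m"
      using uv uv' Np mp unfolding prime_el_def by blast+
    ultimately show "mul w w' \<in> T" unfolding T_def by blast
  qed
  moreover have "\<forall>w\<in>T. \<not> w \<le> loc mul N x"
  proof (intro ballI notI)
    fix w assume "w \<in> T" "w \<le> loc mul N x"
    then obtain u v where uv: "mul u v \<le> loc mul N x" "compact_el u" "\<not> u \<le> N" "\<not> v \<le> m"
      unfolding T_def by blast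
    then have "v \<le> loc mul N x" using loc_saturated[OF Np] by blast
    then show False using le uv(4) order_trans by blast
  qed
  ultimately obtain p where p: "prime_el mul p" "loc mul N x \<le> p" "\<forall>w\<in>T. \<not> w \<le> p"
    by (rule exists_prime_avoiding)
  have "p \<le> N" by (rule ccontr, erule not_le_compactE) (use p(3) T_N in blast)
  moreover have "p \<le> m" by (rule ccontr, erule not_le_compactE) (use p(3) T_m in blast)
  ultimately show thesis using that p(1,2) by blast
qed

lemma loc_not_le_maximal:
  assumes h: "h_local mul" and a: "a \<noteq> bot"
    and N: "maximal_el N" and m: "maximal_el m" and "N \<noteq> m"
  shows "\<not> loc mul N a \<le> m"
proof
  assume "loc mul N a \<le> m"
  then obtain p where p: "prime_el mul p" "loc mul N a \<le> p" "p \<le> N" "p \<le> m"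
    using exists_prime_below_if_loc_le N m maximal_el_imp_prime by metis
  have "a \<le> loc mul N a" using N le_loc unfolding maximal_el_def by blast
  also note p(2)
  finally have "a \<le> p" .
  then have "p \<noteq> bot" using a by (auto simp: bot_unique)
  then have "\<exists>!M. maximal_el M \<and> p \<le> M" using h p(1) unfolding h_local_def by blast
  then show False using N m p(3,4) \<open>N \<noteq> m\<close> by blast
qed

lemma res_not_le_maximal_if_le_loc:
  assumes h: "h_local mul" and a: "a \<noteq> bot" and m: "maximal_el m"
    and C: "C \<le> loc mul m a"
  shows "\<not> res mul a C \<le> m"
proof -
  define F where "F = {N. maximal_el N \<and> a \<le> N \<and> N \<noteq> m}"
  have "finite {N. maximal_el N \<and> a \<le> N}" using h a unfolding h_local_def by simp
  then have "finite F" unfolding F_def by (rule rev_finite_subset) blast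
  moreover have "\<forall>N\<in>F. \<not> res mul (loc mul N a) C \<le> m"
  proof
    fix N assume "N \<in> F"
    then have "\<not> loc mul N a \<le> m"
      using loc_not_le_maximal[OF h a _ m] unfolding F_def by blast
    moreover have "loc mul N a \<le> res mul (loc mul N a) C" by (simp add: le_res_iff mul_le_left)
    ultimately show "\<not> res mul (loc mul N a) C \<le> m" using order_trans by blast
  qed
  ultimately obtain s where s: "compact_el s" "\<not> s \<le> m" "\<forall>N\<in>F. s \<le> res mul (loc mul N a) C"
    using exists_compact_below_all_not_le_prime[OF maximal_el_imp_prime[OF m],
        where y = "\<lambda>N. res mul (loc mul N a) C"] by blast
  have "mul s C \<le> a"
  proof (rule le_of_le_loc_maximal)
    fix N :: 'a assume N: "maximal_el N"
    consider "N = m" | "\<not> a \<le> N" | "N \<in> F" using N unfolding F_def by blast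
    then show "mul s C \<le> loc mul N a"
    proof cases
      case 1
      then show ?thesis using mul_le_right[of s C] C by simp
    next
      case 2
      then show ?thesis by (simp add: loc_eq_top)
    next
      case 3
      then show ?thesis using s(3) by (simp add: le_res_iff)
    qed
  qed
  then have "s \<le> res mul a C" by (simp add: le_res_iff)
  then show ?thesis using s(2) order_trans by blast
qed

lemma loc_res:
  assumes h: "h_local mul" and a: "a \<noteq> bot" and m: "maximal_el m"
  shows "loc mul m (res mul a b) = res mul (loc mul m a) (loc mul m b)"
proof (rule antisym)
  have "mul (loc mul m (res mul a b)) (loc mul m b) \<le> loc mul m (mul (res mul a b) b)"
    by (rule mul_loc_le_loc_mul[OF maximal_el_imp_prime[OF m]])
  also have "\<dots> \<le> loc mul m a" by (rule loc_mono[OF mul_res_le])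
  finally show "loc mul m (res mul a b) \<le> res mul (loc mul m a) (loc mul m b)"
    by (simp add: le_res_iff)
next
  show "res mul (loc mul m a) (loc mul m b) \<le> loc mul m (res mul a b)"
  proof (rule le_by_compacts)
    fix x assume x: "compact_el x" "x \<le> res mul (loc mul m a) (loc mul m b)"
    have "m \<noteq> top" using m unfolding maximal_el_def by blast
    then have "mul x b \<le> mul x (loc mul m b)" by (simp add: mul_mono le_loc)
    also have "\<dots> \<le> loc mul m a" using x(2) by (simp add: le_res_iff)
    finally obtain s where s: "compact_el s" "s \<le> res mul a (mul x b)" "\<not> s \<le> m"
      using res_not_le_maximal_if_le_loc[OF h a m] by (blast elim: not_le_compactE)
    have "mul (mul x s) b \<le> a" using s(2) by (simp add: le_res_iff mul_ac)
    then show "x \<le> loc mul m (res mul a b)"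
      using x(1) s(1,3) by (intro le_locI[of x s]) (simp_all add: le_res_iff)
  qed
qed

end

theorem proposition3p11:
  fixes mul :: "'a::complete_lattice \<Rightarrow> 'a \<Rightarrow> 'a"
    and a b m :: 'a
  assumes "C_lattice mul"
    and "lattice_domain mul"
    and "h_local mul"
    and "\<forall>x. \<exists>S. (\<forall>s\<in>S. principal_el mul s) \<and> x = Sup S"
    and "a \<noteq> bot" and "b \<noteq> bot"
    and "maximal_el m"
  shows "loc mul m (res mul a b) = res mul (loc mul m a) (loc mul m b)"
proof -
  interpret c_lattice mul by (rule c_lattice.intro) (rule assms(1))
  show ?thesis using assms(3,5,7) by (rule loc_res)
qed

end
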